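(* Assume conditions (C1) and (C2) hold, and suppose $p_n\ge0$, $\mu_n\ge 0$ with $\sum_n p_n<\infty$. Let $\{w_n\},\{y_n\}$ be generated by Algorithm 3.1. If $\lim_{n\to\infty}\|w_n-y_n\|=0$ and $\{w_n\}$ converges weakly to some $z\in H$, then $z\in\Omega$.
   Context: Let $H$ be a real Hilbert space, $A:H\to H$ a single-valued mapping and $B:H\to 2^H$ a set-valued mapping, and let $\Omega:=(A+B)^{-1}(0)=\{x\in H:\ 0\in Ax+Bx\}$. Algorithm 3.1 is the following iteration. Fix $x_0,x_1\in H$, $\mu\in(0,1)$, $\lambda_1>0$, real sequences $\{\alpha_n\},\{\beta_n\},\{\theta_n\}$ and nonnegative real sequences $\{\mu_n\},\{p_n\}$. For $n=1,2,\dots$ compute $w_n=x_n+\alpha_n(x_n-x_{n-1})$, $z_n=x_n+\beta_n(x_n-x_{n-1})$, $y_n=(I+\lambda_nB)^{-1}(I-\lambda_nA)w_n$, and set $\lambda_{n+1}=\min\{(\mu_n+\mu)\|w_n-y_n\|/\|Aw_n-Ay_n\|,\ \lambda_n+p_n\}$ if $Aw_n\neq Ay_n$, and $\lambda_{n+1}=\lambda_n+p_n$ otherwise. If $w_n=y_n$ the algorithm stops (then $y_n\in\Omega$). Otherwise set $x_{n+1}=(1-\theta_n)z_n+\theta_n\big(y_n-\lambda_n(Ay_n-Aw_n)\big)$ and continue. Here $I$ is the identity and $(I+\lambda B)^{-1}$ is the resolvent of $B$. Throughout, it is assumed that the algorithm does not stop, so that infinite sequences $\{x_n\},\{w_n\},\{z_n\},\{y_n\},\{\lambda_n\}$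 are generated. Condition (C1): $\Omega\neq\emptyset$. Condition (C2): $A$ is $L$-Lipschitz continuous and monotone, and $B$ is maximal monotone. *)

theory Defs
  imports "HOL-Analysis.Analysis"
begin

text \<open>Real Hilbert space: type class real_inner together with complete_space.
Set-valued maps are modelled as functions into sets.\<close>

definition lipschitz_op :: "real \<Rightarrow> ('a::real_normed_vector \<Rightarrow> 'a) \<Rightarrow> bool" where
  "lipschitz_op L A \<longleftrightarrow> (\<forall>x y. norm (A x - A y) \<le> L * norm (x - y))"

definition monotone_op :: "('a::real_inner \<Rightarrow> 'a) \<Rightarrow> bool" where
  "monotone_op A \<longleftrightarrow> (\<forall>x y. (A x - A y) \<bullet> (x - y) \<ge> 0)"

definition monotone_setop :: "('a::real_inner \<Rightarrow> 'a set) \<Rightarrow> bool" where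
  "monotone_setop B \<longleftrightarrow> (\<forall>x y u v. u \<in> B x \<longrightarrow> v \<in> B y \<longrightarrow> (u - v) \<bullet> (x - y) \<ge> 0)"

definition maximal_monotone :: "('a::real_inner \<Rightarrow> 'a set) \<Rightarrow> bool" where
  "maximal_monotone B \<longleftrightarrow> monotone_setop B \<and>
     (\<forall>B'. monotone_setop B' \<and> (\<forall>x. B x \<subseteq> B' x) \<longrightarrow> B' = B)"

text \<open>Resolvent (I + lam B)^{-1} as the inverse of the set-valued operator I + lam B:
the set of all y with x \<in> y + lam B y.\<close>
definition resolvent :: "real \<Rightarrow> ('a::real_vector \<Rightarrow> 'a set) \<Rightarrow> 'a \<Rightarrow> 'a set" where
  "resolvent lam B x = {y. \<exists>b\<in>B y. x = y + lam *\<^sub>R b}"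

definition zeros_sum :: "('a::real_vector \<Rightarrow> 'a) \<Rightarrow> ('a \<Rightarrow> 'a set) \<Rightarrow> 'a set" where
  "zeros_sum A B = {x. \<exists>b\<in>B x. A x + b = 0}"

definition weakly_converges :: "(nat \<Rightarrow> 'a::real_inner) \<Rightarrow> 'a \<Rightarrow> bool" where
  "weakly_converges x z \<longleftrightarrow> (\<forall>v. (\<lambda>n. x n \<bullet> v) \<longlonglongrightarrow> z \<bullet> v)"

end

(* The step sizes stay above min (lam 1) (mu / max L 1), so the residuals
   c n = (w n - y n) / lam n - (A (w n) - A (y n)) lie in (A + B) (y n) and tend to 0 strongly,
   while y n converges weakly to zz together with w n. Monotonicity of A + B survives this
   weak-strong limit: (b + A u) . (u - zz) >= 0 whenever b is in B u. Since A + B is maximal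
   monotone this forces 0 in (A + B) zz; concretely, for a small step l the equation
   u + l (A u + b) = zz with b in B u is solved by a Banach fixed point of the resolvent of B after a
   forward step, and testing the inequality at this u gives u = zz. Weak convergence enters only
   through pairing with fixed vectors and the uniform boundedness principle (Baire category).

   The resolvent of B exists by Minty's theorem, proved in the style of Simons and Zalinescu: over
   the graph of B, the supremum of the Fitzpatrick terms is a strongly convex function of (x, u)
   bounded below by |x + u|^2 / 2, so it attains its minimum m at some (x0, u0); comparing with
   graph points shows that (-u0, -x0) lies in the graph and that m + |x0 + u0|^2 / 2 <= 0. *)

theory Submission
  imports Defs
begin

lemma maximal_monotone_iff:
  "maximal_monotone B \<longleftrightarrow> monotone_setop B \<and>
     (\<forall>a c. (\<forall>y. \<forall>v\<in>B y. 0 \<le> (v - c) \<bullet> (y - a)) \<longrightarrow> c \<in> B a)"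
  (is "_ \<longleftrightarrow> _ \<and> ?related_in_graph")
proof
  assume max: "maximal_monotone B"
  then have mono: "monotone_setop B" by (simp add: maximal_monotone_def)
  have "c \<in> B a" if rel: "\<forall>y. \<forall>v\<in>B y. 0 \<le> (v - c) \<bullet> (y - a)" for a c
  proof -
    define B' where "B' = B(a := insert c (B a))"
    have mem: "u \<in> B' x \<longleftrightarrow> u \<in> B x \<or> (x = a \<and> u = c)" for u x
      by (auto simp: B'_def)
    have rel': "0 \<le> (c - v) \<bullet> (a - y)" if "v \<in> B y" for v y
      using rel that by (metis inner_minus_left inner_minus_right minus_diff_eq minus_minus)
    have "monotone_setop B'"
      unfolding monotone_setop_def mem
      using mono rel rel' by (auto simp: monotone_setop_def)
    moreover have "\<forall>x. B x \<subseteq> B' x" by (auto simp: mem)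
    ultimately have "B' = B" using max by (simp add: maximal_monotone_def)
    then show "c \<in> B a" using mem by blast
  qed
  with mono show "monotone_setop B \<and> ?related_in_graph"
    by blast
next
  assume "monotone_setop B \<and> ?related_in_graph"
  then have mono: "monotone_setop B"
    and rel: "\<And>a c. \<forall>y. \<forall>v\<in>B y. 0 \<le> (v - c) \<bullet> (y - a) \<Longrightarrow> c \<in> B a"
    by blast+
  have "B' = B" if mono': "monotone_setop B'" and sub: "\<forall>x. B x \<subseteq> B' x" for B'
  proof (intro ext equalityI subsetI)
    fix a c assume "c \<in> B' a"
    then show "c \<in> B a"
      using rel mono' sub unfolding monotone_setop_def by blast
  qed (use sub in blast)
  with mono show "maximal_monotone B"
    unfolding maximal_monotone_def by blast
qed

lemma maximal_monotoneD:
  assumes "maximal_monotone B" and "\<And>y v. v \<in> B y \<Longrightarrow> 0 \<le> (v - c) \<bullet> (y - a)"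
  shows "c \<in> B a"
  using assms unfolding maximal_monotone_iff by blast

lemma maximal_monotone_graph_nonempty:
  assumes "maximal_monotone B"
  obtains x u where "u \<in> B x"
proof (cases "\<exists>x u. u \<in> B x")
  case False
  have "0 \<in> B 0"
    by (rule maximal_monotoneD[OF assms]) (use False in blast)
  then show ?thesis using that by blast
qed blast

lemma Cauchy_if_dist_le_add:
  fixes X :: "nat \<Rightarrow> 'a::metric_space"
  assumes dist: "\<And>i j. dist (X i) (X j) \<le> r i + r j" and r: "r \<longlonglongrightarrow> 0"
  shows "Cauchy X"
proof (rule metric_CauchyI)
  fix e :: real assume "0 < e"
  then obtain M where M: "\<And>n. n \<ge> M \<Longrightarrow> \<bar>r n\<bar> < e / 2"
    using r by (metis LIMSEQ_D diff_zero half_gt_zero real_norm_def)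
  show "\<exists>M. \<forall>m\<ge>M. \<forall>n\<ge>M. dist (X m) (X n) < e"
    by (intro exI[of _ M] allI impI) (smt (verit) M dist field_sum_of_halves)
qed

(* Its supremum over the graph points (y, v) of B is the Fitzpatrick function of B plus
   (|x|^2 + |u|^2) / 2. That supremum may be infinite, so it is handled through its sublevel sets. *)
definition fitzpatrick_term :: "'a::real_inner \<Rightarrow> 'a \<Rightarrow> 'a \<Rightarrow> 'a \<Rightarrow> real" where
  "fitzpatrick_term y v x u = norm (x + u)^2 / 2 - (x - y) \<bullet> (u - v)"

definition fitzpatrick_sublevel :: "('a::real_inner \<Rightarrow> 'a set) \<Rightarrow> 'a \<Rightarrow> 'a \<Rightarrow> real \<Rightarrow> bool" where
  "fitzpatrick_sublevel B x u t \<longleftrightarrow> (\<forall>y. \<forall>v\<in>B y. fitzpatrick_term y v x u \<le> t)"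

lemma fitzpatrick_term_convex_combination:
  fixes x1 x2 u1 u2 :: "'a::real_inner"
  shows "fitzpatrick_term y v ((1 - s) *\<^sub>R x1 + s *\<^sub>R x2) ((1 - s) *\<^sub>R u1 + s *\<^sub>R u2) =
    (1 - s) * fitzpatrick_term y v x1 u1 + s * fitzpatrick_term y v x2 u2
      - s * (1 - s) * (norm (x1 - x2)^2 + norm (u1 - u2)^2) / 2"
  unfolding fitzpatrick_term_def power2_norm_eq_inner
  by (simp add: inner_add_left inner_add_right inner_diff_left inner_diff_right inner_commute
      algebra_simps) (simp add: field_simps)

lemma fitzpatrick_sublevel_mono:
  "fitzpatrick_sublevel B x u t \<Longrightarrow> t \<le> t' \<Longrightarrow> fitzpatrick_sublevel B x u t'"
  unfolding fitzpatrick_sublevel_def by force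

lemma fitzpatrick_sublevel_graph:
  assumes "monotone_setop B" and "u \<in> B x"
  shows "fitzpatrick_sublevel B x u (norm (x + u)^2 / 2)"
proof -
  have "0 \<le> (x - y) \<bullet> (u - v)" if "v \<in> B y" for y v
    using assms that unfolding monotone_setop_def by (metis inner_commute)
  then show ?thesis
    by (simp add: fitzpatrick_sublevel_def fitzpatrick_term_def)
qed

lemma fitzpatrick_sublevel_ge:
  assumes "maximal_monotone B" and "fitzpatrick_sublevel B x u t"
  shows "norm (x + u)^2 / 2 \<le> t"
proof (cases "u \<in> B x")
  case True
  then have "fitzpatrick_term x u x u \<le> t"
    using assms(2) by (simp add: fitzpatrick_sublevel_def)
  then show ?thesis
    by (simp add: fitzpatrick_term_def)
next
  case False
  then obtain y v where "v \<in> B y" "(v - u) \<bullet> (y - x) < 0"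
    using assms(1) unfolding maximal_monotone_iff by (meson not_le)
  then show ?thesis
    using assms(2) unfolding fitzpatrick_sublevel_def fitzpatrick_term_def
    by (smt (verit, best) inner_commute inner_minus_left inner_minus_right minus_diff_eq)
qed

lemma fitzpatrick_sublevel_convex:
  assumes "fitzpatrick_sublevel B x1 u1 t1" "fitzpatrick_sublevel B x2 u2 t2" "0 \<le> s" "s \<le> 1"
  shows "fitzpatrick_sublevel B ((1 - s) *\<^sub>R x1 + s *\<^sub>R x2) ((1 - s) *\<^sub>R u1 + s *\<^sub>R u2)
    ((1 - s) * t1 + s * t2 - s * (1 - s) * (norm (x1 - x2)^2 + norm (u1 - u2)^2) / 2)"
  unfolding fitzpatrick_sublevel_def fitzpatrick_term_convex_combination
proof (intro allI ballI)
  fix y v assume "v \<in> B y"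
  then have "fitzpatrick_term y v x1 u1 \<le> t1" "fitzpatrick_term y v x2 u2 \<le> t2"
    using assms(1,2) by (auto simp: fitzpatrick_sublevel_def)
  then have "(1 - s) * fitzpatrick_term y v x1 u1 + s * fitzpatrick_term y v x2 u2 \<le> (1 - s) * t1 + s * t2"
    using assms(3,4) by (intro add_mono mult_left_mono) auto
  then show "(1 - s) * fitzpatrick_term y v x1 u1 + s * fitzpatrick_term y v x2 u2
      - s * (1 - s) * (norm (x1 - x2)^2 + norm (u1 - u2)^2) / 2
    \<le> (1 - s) * t1 + s * t2 - s * (1 - s) * (norm (x1 - x2)^2 + norm (u1 - u2)^2) / 2"
    by linarith
qed

lemma fitzpatrick_sublevel_limit:
  assumes "xs \<longlonglongrightarrow> x" "us \<longlonglongrightarrow> u" "ts \<longlonglongrightarrow> t" "\<And>k. fitzpatrick_sublevel B (xs k) (us k) (ts k)"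
  shows "fitzpatrick_sublevel B x u t"
  unfolding fitzpatrick_sublevel_def
proof (intro allI ballI)
  fix y v assume "v \<in> B y"
  have "(\<lambda>k. fitzpatrick_term y v (xs k) (us k)) \<longlonglongrightarrow> fitzpatrick_term y v x u"
    unfolding fitzpatrick_term_def by (intro tendsto_intros assms(1,2)) simp
  then show "fitzpatrick_term y v x u \<le> t"
    using assms(3,4) \<open>v \<in> B y\<close> by (intro LIMSEQ_le) (auto simp: fitzpatrick_sublevel_def)
qed

lemma fitzpatrick_sublevel_near_min_dist:
  assumes min: "\<And>x u t. fitzpatrick_sublevel B x u t \<Longrightarrow> m \<le> t"
    and "fitzpatrick_sublevel B x1 u1 (m + d1)" "fitzpatrick_sublevel B x2 u2 (m + d2)"
  shows "norm (x1 - x2)^2 + norm (u1 - u2)^2 \<le> 4 * (d1 + d2)"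
proof -
  have "m \<le> (1 - 1/2) * (m + d1) + 1/2 * (m + d2)
      - 1/2 * (1 - 1/2) * (norm (x1 - x2)^2 + norm (u1 - u2)^2) / 2"
    by (rule min, rule fitzpatrick_sublevel_convex) (use assms(2,3) in auto)
  then show ?thesis by (simp add: field_simps)
qed

lemma fitzpatrick_sublevel_infimum:
  assumes max: "maximal_monotone B"
  obtains m where "\<And>x u t. fitzpatrick_sublevel B x u t \<Longrightarrow> m \<le> t"
    and "\<And>e. 0 < e \<Longrightarrow> \<exists>x u. fitzpatrick_sublevel B x u (m + e)"
proof -
  define T where "T = {t. \<exists>x u. fitzpatrick_sublevel B x u t}"
  obtain x u where "u \<in> B x"
    using maximal_monotone_graph_nonempty[OF max] .
  then have "T \<noteq> {}"
    using fitzpatrick_sublevel_graph max unfolding T_def maximal_monotone_def by blast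
  have "0 \<le> t" if "t \<in> T" for t
  proof -
    obtain x u where "fitzpatrick_sublevel B x u t" using \<open>t \<in> T\<close> T_def by blast
    then have "norm (x + u)^2 / 2 \<le> t" by (rule fitzpatrick_sublevel_ge[OF max])
    moreover have "0 \<le> norm (x + u)^2 / 2" by simp
    ultimately show ?thesis by linarith
  qed
  then have "bdd_below T" by (rule bdd_belowI)
  have "Inf T \<le> t" if "fitzpatrick_sublevel B x u t" for x u t
    using \<open>bdd_below T\<close> that by (auto simp: T_def intro: cInf_lower)
  moreover have "\<exists>x u. fitzpatrick_sublevel B x u (Inf T + e)" if "0 < e" for e
  proof -
    obtain x u t where "fitzpatrick_sublevel B x u t" "t < Inf T + e"
      using cInf_less_iff[OF \<open>T \<noteq> {}\<close> \<open>bdd_below T\<close>, of "Inf T + e"] \<open>0 < e\<close>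
      unfolding T_def by auto
    then show ?thesis
      by (meson fitzpatrick_sublevel_mono less_imp_le)
  qed
  ultimately show ?thesis using that by blast
qed

lemma fitzpatrick_sublevel_minimizer:
  fixes B :: "'a::{real_inner,complete_space} \<Rightarrow> 'a set"
  assumes max: "maximal_monotone B"
  obtains x0 u0 m where "fitzpatrick_sublevel B x0 u0 m"
    and "\<And>x u t. fitzpatrick_sublevel B x u t \<Longrightarrow> m \<le> t"
proof -
  obtain m where m_min: "\<And>x u t. fitzpatrick_sublevel B x u t \<Longrightarrow> m \<le> t"
    and near: "\<And>e. 0 < e \<Longrightarrow> \<exists>x u. fitzpatrick_sublevel B x u (m + e)"
    using fitzpatrick_sublevel_infimum[OF max] by blast
  define e where "e k = inverse (real (Suc k))" for k
  obtain xs us where seq: "\<And>k. fitzpatrick_sublevel B (xs k) (us k) (m + e k ^ 2)"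
    using near[of "e _ ^ 2"] unfolding e_def by (metis zero_less_power of_nat_0_less_iff
        positive_imp_inverse_positive zero_less_Suc)
  have e_lim: "(\<lambda>k. 2 * e k) \<longlonglongrightarrow> 0"
    unfolding e_def using tendsto_mult_right_zero[OF LIMSEQ_inverse_real_of_nat] by simp
  have D: "norm (xs i - xs j)^2 + norm (us i - us j)^2 \<le> (2 * e i + 2 * e j)^2" for i j
  proof -
    have "0 \<le> e i" "0 \<le> e j" by (simp_all add: e_def)
    then have "4 * (e i ^ 2 + e j ^ 2) \<le> (2 * e i + 2 * e j)^2"
      by (simp add: power2_eq_square algebra_simps)
    moreover have "norm (xs i - xs j)^2 + norm (us i - us j)^2 \<le> 4 * (e i ^ 2 + e j ^ 2)"
      by (rule fitzpatrick_sublevel_near_min_dist[OF _ seq seq]) (rule m_min)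
    ultimately show ?thesis by linarith
  qed
  have "0 \<le> 2 * e i + 2 * e j" for i j by (simp add: e_def)
  then have dist_xs: "dist (xs i) (xs j) \<le> 2 * e i + 2 * e j"
    and dist_us: "dist (us i) (us j) \<le> 2 * e i + 2 * e j" for i j
    using D[of i j] unfolding dist_norm
    by (smt (verit) power2_le_imp_le zero_le_power2)+
  have "Cauchy xs" "Cauchy us"
    by (rule Cauchy_if_dist_le_add[OF _ e_lim], simp add: dist_xs dist_us)+
  then obtain x0 u0 where "xs \<longlonglongrightarrow> x0" "us \<longlonglongrightarrow> u0"
    using Cauchy_convergent_iff convergent_def by metis
  moreover have "(\<lambda>k. m + e k ^ 2) \<longlonglongrightarrow> m"
    unfolding e_def
    using tendsto_add[OF tendsto_const tendsto_power[OF LIMSEQ_inverse_real_of_nat, of 2], of m]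
    by simp
  ultimately have "fitzpatrick_sublevel B x0 u0 m"
    using fitzpatrick_sublevel_limit seq by blast
  then show ?thesis using that m_min by blast
qed

lemma fitzpatrick_minimizer_related:
  assumes mono: "monotone_setop B" and lev: "fitzpatrick_sublevel B x0 u0 m"
    and m_min: "\<And>x u t. fitzpatrick_sublevel B x u t \<Longrightarrow> m \<le> t"
    and "v \<in> B y"
  shows "m + norm (x0 + u0)^2 / 2 \<le> (v + x0) \<bullet> (y + u0)"
proof -
  \<comment> \<open>Compare m with the value at the convex combination (1 - s) (x0, u0) + s (y, v), then let s tend to 0.\<close>
  define D where "D = norm (x0 - y)^2 + norm (u0 - v)^2"
  define f where "f s = norm (y + v)^2 / 2 - (1 - s) * D / 2" for s :: real
  have "m \<le> f s" if s: "0 < s" "s < 1" for s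
  proof -
    have "m \<le> (1 - s) * m + s * (norm (y + v)^2 / 2) - s * (1 - s) * D / 2"
      unfolding D_def
      by (rule m_min, rule fitzpatrick_sublevel_convex[OF lev fitzpatrick_sublevel_graph[OF mono]])
        (use s \<open>v \<in> B y\<close> in auto)
    then have "s * m \<le> s * f s"
      by (simp add: f_def algebra_simps)
    then show ?thesis using s by simp
  qed
  then have "\<forall>\<^sub>F s in at_right 0. m \<le> f s"
    by (intro eventually_at_rightI[of 0 1]) auto
  moreover have "(f \<longlongrightarrow> f 0) (at_right 0)"
    unfolding f_def by (intro tendsto_intros) simp
  ultimately have "m \<le> f 0"
    by (intro tendsto_lowerbound) auto
  moreover have "f 0 = (v + x0) \<bullet> (y + u0) - norm (x0 + u0)^2 / 2"
    unfolding f_def D_def power2_norm_eq_inner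
    by (simp add: inner_add_left inner_add_right inner_diff_left inner_diff_right inner_commute
        algebra_simps) (simp add: field_simps)
  ultimately show ?thesis by simp
qed

theorem minty_zero:
  fixes B :: "'a::{real_inner,complete_space} \<Rightarrow> 'a set"
  assumes max: "maximal_monotone B"
  shows "\<exists>x. \<exists>v\<in>B x. x + v = 0"
proof -
  obtain x0 u0 m where lev: "fitzpatrick_sublevel B x0 u0 m"
    and m_min: "\<And>x u t. fitzpatrick_sublevel B x u t \<Longrightarrow> m \<le> t"
    using fitzpatrick_sublevel_minimizer[OF max] by blast
  have mono: "monotone_setop B" using max by (simp add: maximal_monotone_def)
  have related: "m + norm (x0 + u0)^2 / 2 \<le> (v + x0) \<bullet> (y + u0)" if "v \<in> B y" for y v
    by (rule fitzpatrick_minimizer_related[OF mono lev _ that]) (rule m_min)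
  have sq_nonneg: "0 \<le> norm (x0 + u0)^2 / 2" by simp
  have "0 \<le> m"
    using fitzpatrick_sublevel_ge[OF max lev] sq_nonneg by linarith
  have "-x0 \<in> B (-u0)"
  proof (rule maximal_monotoneD[OF max])
    fix y v assume "v \<in> B y"
    then have "0 \<le> (v + x0) \<bullet> (y + u0)"
      using related[OF \<open>v \<in> B y\<close>] \<open>0 \<le> m\<close> sq_nonneg by linarith
    then show "0 \<le> (v - - x0) \<bullet> (y - - u0)" by simp
  qed
  then have "m + norm (x0 + u0)^2 / 2 \<le> 0"
    using related[OF \<open>-x0 \<in> B (-u0)\<close>] by simp
  then have "norm (x0 + u0)^2 / 2 \<le> 0"
    using \<open>0 \<le> m\<close> by linarith
  then have "-u0 + -x0 = 0"
    by (simp add: add_eq_0_iff2 add.commute)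
  with \<open>-x0 \<in> B (-u0)\<close> show ?thesis by blast
qed

lemma maximal_monotone_scaled_shift:
  assumes max: "maximal_monotone B" and l: "0 < l"
  shows "maximal_monotone (\<lambda>y. (\<lambda>v. l *\<^sub>R v) ` B (y + p))" (is "maximal_monotone ?B'")
  unfolding maximal_monotone_iff
proof (intro conjI allI impI)
  show "monotone_setop ?B'"
    unfolding monotone_setop_def
  proof (intro allI impI)
    fix x y u v assume "u \<in> ?B' x" "v \<in> ?B' y"
    then obtain u' v' where "u' \<in> B (x + p)" "v' \<in> B (y + p)" "u = l *\<^sub>R u'" "v = l *\<^sub>R v'"
      by blast
    moreover have "0 \<le> (u' - v') \<bullet> ((x + p) - (y + p))"
      using max calculation(1,2) unfolding maximal_monotone_def monotone_setop_def by blast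
    ultimately show "0 \<le> (u - v) \<bullet> (x - y)"
      using l by (simp add: scaleR_diff_right[symmetric])
  qed
  fix a c assume rel: "\<forall>y. \<forall>v\<in>?B' y. 0 \<le> (v - c) \<bullet> (y - a)"
  have "(1 / l) *\<^sub>R c \<in> B (a + p)"
  proof (rule maximal_monotoneD[OF max])
    fix y v assume "v \<in> B y"
    then have "l *\<^sub>R v \<in> ?B' (y - p)" by (simp add: imageI)
    then have "0 \<le> (l *\<^sub>R v - c) \<bullet> (y - p - a)" using rel by blast
    also have "l *\<^sub>R v - c = l *\<^sub>R (v - (1 / l) *\<^sub>R c)"
      using l by (simp add: scaleR_diff_right)
    finally show "0 \<le> (v - (1 / l) *\<^sub>R c) \<bullet> (y - (a + p))"
      using l by (simp add: zero_le_mult_iff diff_diff_eq add.commute)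
  qed
  then show "c \<in> ?B' a"
    using l by (auto intro: image_eqI[of _ _ "(1 / l) *\<^sub>R c"])
qed

lemma resolvent_nonempty:
  fixes B :: "'a::{real_inner,complete_space} \<Rightarrow> 'a set"
  assumes max: "maximal_monotone B" and l: "0 < l"
  shows "resolvent l B p \<noteq> {}"
proof -
  obtain x v where "v \<in> B (x + p)" "x + l *\<^sub>R v = 0"
    using minty_zero[OF maximal_monotone_scaled_shift[OF max l, of p]] by blast
  then have "x + p \<in> resolvent l B p"
    unfolding resolvent_def by (auto simp: algebra_simps)
  then show ?thesis by blast
qed

lemma resolvent_nonexpansive:
  assumes mono: "monotone_setop B" and l: "0 \<le> l"
    and "x1 \<in> resolvent l B p1" "x2 \<in> resolvent l B p2"
  shows "norm (x1 - x2) \<le> norm (p1 - p2)"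
proof -
  obtain b1 b2 where b: "b1 \<in> B x1" "p1 = x1 + l *\<^sub>R b1" "b2 \<in> B x2" "p2 = x2 + l *\<^sub>R b2"
    using assms(3,4) unfolding resolvent_def by blast
  define d where "d = x1 - x2"
  have "0 \<le> (b1 - b2) \<bullet> d"
    using mono b unfolding monotone_setop_def d_def by blast
  moreover have "(p1 - p2) \<bullet> d = norm d ^ 2 + l * ((b1 - b2) \<bullet> d)"
    using b unfolding d_def
    by (simp add: power2_norm_eq_inner inner_diff_left inner_add_left algebra_simps)
  ultimately have "norm d * norm d \<le> norm (p1 - p2) * norm d"
    using l Cauchy_Schwarz_ineq2[of "p1 - p2" d]
    by (smt (verit) abs_ge_self mult_nonneg_nonneg power2_eq_square)
  then show ?thesis
    unfolding d_def by (cases "x1 = x2") auto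
qed

lemma resolvent_sum_nonempty:
  fixes A :: "'a::{real_inner,complete_space} \<Rightarrow> 'a"
  assumes max: "maximal_monotone B" and lip: "lipschitz_op L A"
    and l: "0 < l" "l * L < 1"
  shows "\<exists>u. \<exists>b\<in>B u. u + l *\<^sub>R (A u + b) = z"
proof -
  define J where "J p = (SOME x. x \<in> resolvent l B p)" for p
  have J: "J p \<in> resolvent l B p" for p
    unfolding J_def using resolvent_nonempty[OF max l(1)] by (simp add: some_in_eq)
  define f where "f u = J (z - l *\<^sub>R A u)" for u
  have "dist (f u) (f v) \<le> max 0 (l * L) * dist u v" for u v
  proof -
    have "dist (f u) (f v) \<le> norm ((z - l *\<^sub>R A u) - (z - l *\<^sub>R A v))"
      unfolding f_def dist_norm
      using max l(1) by (intro resolvent_nonexpansive[OF _ _ J J]) (auto simp: maximal_monotone_def)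
    also have "\<dots> = l * norm (A u - A v)"
      using l(1) by (simp add: scaleR_diff_right[symmetric] norm_minus_commute)
    also have "\<dots> \<le> l * (L * dist u v)"
      using lip l(1) unfolding lipschitz_op_def dist_norm by (intro mult_left_mono) auto
    also have "\<dots> \<le> max 0 (l * L) * dist u v"
      by (simp add: mult.assoc[symmetric] mult_right_mono)
    finally show ?thesis .
  qed
  then obtain u where "f u = u"
    using banach_fix_type[of "max 0 (l * L)" f] l(2) by auto
  then obtain b where "b \<in> B u" "z - l *\<^sub>R A u = u + l *\<^sub>R b"
    using J[of "z - l *\<^sub>R A u"] unfolding f_def resolvent_def by auto
  then show ?thesis
    by (intro exI[of _ u] bexI[of _ b]) (auto simp: algebra_simps)
qed

lemma zeros_sum_if_monotonically_related:
  fixes A :: "'a::{real_inner,complete_space} \<Rightarrow> 'a"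
  assumes max: "maximal_monotone B" and lip: "lipschitz_op L A"
    and rel: "\<And>u b. b \<in> B u \<Longrightarrow> 0 \<le> (b + A u) \<bullet> (u - z)"
  shows "z \<in> zeros_sum A B"
proof -
  define l where "l = 1 / (2 * (\<bar>L\<bar> + 1))"
  have l: "0 < l" "l * L < 1"
    unfolding l_def by (auto simp: field_simps)
  then obtain u b where b: "b \<in> B u" and u: "u + l *\<^sub>R (A u + b) = z"
    using resolvent_sum_nonempty[OF max lip] by blast
  have "0 \<le> (A u + b) \<bullet> (u - z)"
    using rel[OF b] by (simp add: add.commute)
  also have "\<dots> = - l * norm (A u + b)^2"
    using u by (auto simp: power2_norm_eq_inner)
  finally have "A u + b = 0"
    using l(1) by (simp add: mult_le_0_iff)
  with b u show ?thesis
    unfolding zeros_sum_def by auto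
qed

lemma norm_le_if_inner_bounded_on_ball:
  fixes a :: "'a::real_inner"
  assumes r: "0 < r" and bnd: "\<And>v. v \<in> ball v0 r \<Longrightarrow> \<bar>a \<bullet> v\<bar> \<le> k"
  shows "norm a \<le> 4 * k / r"
proof (cases "a = 0")
  case True
  moreover have "0 \<le> k" using bnd[of v0] r by simp
  ultimately show ?thesis using r by simp
next
  case False
  define v where "v = v0 + (r / 2 / norm a) *\<^sub>R a"
  have "v \<in> ball v0 r"
    using False r by (simp add: v_def dist_norm)
  then have "\<bar>a \<bullet> v\<bar> \<le> k" "\<bar>a \<bullet> v0\<bar> \<le> k"
    using bnd r by auto
  moreover have "a \<bullet> v = a \<bullet> v0 + r / 2 * norm a"
    using False by (simp add: v_def inner_add_right power2_norm_eq_inner[symmetric] power2_eq_square)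
  ultimately have "r / 2 * norm a \<le> 2 * k" by linarith
  then show ?thesis using r by (simp add: field_simps)
qed

lemma weakly_bounded_imp_Bseq:
  fixes s :: "nat \<Rightarrow> 'a::{real_inner,complete_space}"
  assumes weak: "\<And>v. Bseq (\<lambda>n. s n \<bullet> v)"
  shows "Bseq s"
proof -
  define F where "F k = {v. \<forall>n. \<bar>s n \<bullet> v\<bar> \<le> real k}" for k :: nat
  have closed: "closed (F k)" for k
    unfolding F_def by (intro closed_Collect_all closed_Collect_le continuous_intros)
  have cover: "\<Union>(range F) = UNIV"
  proof (intro set_eqI iffI UNIV_I)
    fix v :: 'a
    obtain K where "\<And>n. \<bar>s n \<bullet> v\<bar> \<le> K"
      using weak[of v] unfolding Bseq_def by auto
    then have "\<bar>s n \<bullet> v\<bar> \<le> real (nat \<lceil>K\<rceil>)" for n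
      using real_nat_ceiling_ge order_trans by blast
    then have "v \<in> F (nat \<lceil>K\<rceil>)"
      unfolding F_def by blast
    then show "v \<in> \<Union>(range F)" by blast
  qed
  have "\<exists>k. interior (F k) \<noteq> {}"
  proof (rule ccontr)
    assume "\<nexists>k. interior (F k) \<noteq> {}"
    then have "euclidean interior_of \<Union>(range F) = {}"
      using completely_metrizable_space_euclidean closed
      by (intro Baire_category_alt) (auto simp: closed_closedin[symmetric])
    then show False using cover by simp
  qed
  then obtain k v0 r where "0 < r" "ball v0 r \<subseteq> F k"
    by (meson ex_in_conv mem_interior)
  then have "norm (s n) \<le> 4 * real k / r" for n
    by (intro norm_le_if_inner_bounded_on_ball) (auto simp: F_def)
  then show ?thesis by (rule BseqI')
qed

lemma weakly_converges_imp_Bseq: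
  fixes s :: "nat \<Rightarrow> 'a::{real_inner,complete_space}"
  assumes "weakly_converges s z"
  shows "Bseq s"
proof (rule weakly_bounded_imp_Bseq)
  fix v
  have "convergent (\<lambda>n. s n \<bullet> v)"
    using assms unfolding weakly_converges_def convergent_def by blast
  then show "Bseq (\<lambda>n. s n \<bullet> v)"
    by (rule convergent_imp_Bseq)
qed

lemma weakly_converges_norm_diff:
  assumes "weakly_converges w z" and "(\<lambda>n. norm (w n - y n)) \<longlonglongrightarrow> 0"
  shows "weakly_converges y z"
  unfolding weakly_converges_def
proof
  fix v
  have "(\<lambda>n. w n - y n) \<longlonglongrightarrow> 0"
    using assms(2) by (simp add: tendsto_norm_zero_iff)
  from tendsto_inner[OF this tendsto_const] have "(\<lambda>n. (w n - y n) \<bullet> v) \<longlonglongrightarrow> 0"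
    by simp
  moreover have "(\<lambda>n. w n \<bullet> v) \<longlonglongrightarrow> z \<bullet> v"
    using assms(1) unfolding weakly_converges_def by blast
  ultimately have "(\<lambda>n. w n \<bullet> v - (w n - y n) \<bullet> v) \<longlonglongrightarrow> z \<bullet> v - 0"
    by (intro tendsto_diff)
  then show "(\<lambda>n. y n \<bullet> v) \<longlonglongrightarrow> z \<bullet> v"
    by (simp add: inner_diff_left)
qed

lemma monotonically_related_weak_strong_limit:
  fixes A :: "'a::{real_inner,complete_space} \<Rightarrow> 'a"
  assumes monoA: "monotone_op A" and monoB: "monotone_setop B"
    and res: "\<forall>\<^sub>F n in sequentially. c n - A (y n) \<in> B (y n)"
    and c: "c \<longlonglongrightarrow> 0" and weak: "weakly_converges y z" and b: "b \<in> B u"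
  shows "0 \<le> (b + A u) \<bullet> (u - z)"
proof -
  obtain K where K: "\<And>n. norm (y n) \<le> K"
    using weakly_converges_imp_Bseq[OF weak] unfolding Bseq_def by auto
  have "norm (u - y n) \<le> norm u + K" for n
    using norm_triangle_ineq4[of u "y n"] K[of n] by linarith
  then have "Bseq (\<lambda>n. u - y n)"
    by (rule BseqI')
  with c have "Zfun (\<lambda>n. c n \<bullet> (u - y n)) sequentially"
    by (intro bounded_bilinear.Zfun_prod_Bfun[OF bounded_bilinear_inner]) (simp_all add: tendsto_Zfun_iff)
  then have lim_c: "(\<lambda>n. c n \<bullet> (u - y n)) \<longlonglongrightarrow> 0"
    by (simp add: tendsto_Zfun_iff)
  have lim_r: "(\<lambda>n. (b + A u) \<bullet> (u - y n)) \<longlonglongrightarrow> (b + A u) \<bullet> (u - z)"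
  proof -
    have "(\<lambda>n. (b + A u) \<bullet> y n) \<longlonglongrightarrow> (b + A u) \<bullet> z"
      using weak unfolding weakly_converges_def inner_commute[of "b + A u"] by blast
    then have "(\<lambda>n. (b + A u) \<bullet> u - (b + A u) \<bullet> y n) \<longlonglongrightarrow> (b + A u) \<bullet> u - (b + A u) \<bullet> z"
      by (intro tendsto_diff tendsto_const)
    then show ?thesis by (simp only: inner_diff_right)
  qed
  have "\<forall>\<^sub>F n in sequentially. c n \<bullet> (u - y n) \<le> (b + A u) \<bullet> (u - y n)"
    using res
  proof eventually_elim
    case (elim n)
    have "0 \<le> (b - (c n - A (y n))) \<bullet> (u - y n)"
      using monoB b elim unfolding monotone_setop_def by blast
    moreover have "0 \<le> (A u - A (y n)) \<bullet> (u - y n)"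
      using monoA unfolding monotone_op_def by blast
    ultimately have "0 \<le> (b - (c n - A (y n))) \<bullet> (u - y n) + (A u - A (y n)) \<bullet> (u - y n)"
      by (rule add_nonneg_nonneg)
    then show ?case
      unfolding inner_diff_left inner_add_left by linarith
  qed
  then show ?thesis
    by (rule tendsto_le[OF trivial_limit_sequentially lim_r lim_c])
qed

lemma step_size_update_ge:
  fixes A :: "'a::real_normed_vector \<Rightarrow> 'a"
  assumes lip: "lipschitz_op L A" and mu: "0 < mu" and "0 \<le> nu" "0 \<le> q"
  shows "min l (mu / max L 1) \<le>
    (if A a \<noteq> A b then min ((nu + mu) * norm (a - b) / norm (A a - A b)) (l + q) else l + q)"
proof (cases "A a = A b")
  case False
  define d where "d = norm (a - b)"
  define e where "e = norm (A a - A b)"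
  have "0 < e" using False by (simp add: e_def)
  moreover have "e \<le> max L 1 * d"
    using lip unfolding lipschitz_op_def e_def d_def
    by (metis max.cobounded1 mult_right_mono norm_ge_zero order_trans)
  ultimately have "0 < d" by (smt (verit) mult_nonneg_nonpos norm_ge_zero d_def)
  have "mu / max L 1 = mu * d / (max L 1 * d)"
    using \<open>0 < d\<close> by simp
  also have "\<dots> \<le> mu * d / e"
    using \<open>0 < e\<close> \<open>e \<le> max L 1 * d\<close> \<open>0 < d\<close> mu by (intro divide_left_mono) auto
  also have "\<dots> \<le> (nu + mu) * d / e"
    using \<open>0 < e\<close> \<open>0 < d\<close> \<open>0 \<le> nu\<close> by (intro divide_right_mono mult_right_mono) auto
  finally show ?thesis
    using False \<open>0 \<le> q\<close> unfolding d_def e_def by auto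
qed (use \<open>0 \<le> q\<close> in auto)

lemma step_sizes_bounded_below:
  fixes A :: "'a::real_normed_vector \<Rightarrow> 'a"
  assumes lip: "lipschitz_op L A" and mu: "0 < mu"
    and p: "\<And>n. 0 \<le> p n" and mu_seq: "\<And>n. 0 \<le> mu_seq n"
    and lam_def: "\<And>n. n \<ge> 1 \<Longrightarrow> lam (Suc n) =
        (if A (w n) \<noteq> A (y n)
         then min ((mu_seq n + mu) * norm (w n - y n) / norm (A (w n) - A (y n))) (lam n + p n)
         else lam n + p n)"
    and "n \<ge> 1"
  shows "min (lam 1) (mu / max L 1) \<le> lam n"
  using \<open>n \<ge> 1\<close>
proof (induction n rule: nat_induct_at_least)
  case (Suc n)
  have "min (lam n) (mu / max L 1) \<le> lam (Suc n)"
    unfolding lam_def[OF Suc.hyps] by (rule step_size_update_ge[OF lip mu mu_seq p])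
  with Suc.IH show ?case by linarith
qed simp

lemma forward_backward_residual:
  fixes A :: "'a::real_normed_vector \<Rightarrow> 'a"
  assumes lip: "lipschitz_op L A" and l: "0 < l" and y: "y \<in> resolvent l B (w - l *\<^sub>R A w)"
  defines "c \<equiv> (1 / l) *\<^sub>R (w - y) - (A w - A y)"
  shows "c - A y \<in> B y" and "norm c \<le> (1 / l + L) * norm (w - y)"
proof -
  obtain b where "b \<in> B y" "w - l *\<^sub>R A w = y + l *\<^sub>R b"
    using y unfolding resolvent_def by blast
  moreover from this(2) have "l *\<^sub>R b = l *\<^sub>R ((1 / l) *\<^sub>R (w - y) - A w)"
    using l by (simp add: algebra_simps)
  then have "b = (1 / l) *\<^sub>R (w - y) - A w"
    using l by simp
  ultimately show "c - A y \<in> B y"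
    unfolding c_def by simp
  have "norm c \<le> norm ((1 / l) *\<^sub>R (w - y)) + norm (A w - A y)"
    unfolding c_def by (rule norm_triangle_ineq4)
  also have "\<dots> \<le> 1 / l * norm (w - y) + L * norm (w - y)"
    using lip l unfolding lipschitz_op_def by (simp add: add_left_mono)
  finally show "norm c \<le> (1 / l + L) * norm (w - y)"
    by (simp add: algebra_simps)
qed

lemma forward_backward_residuals_vanish:
  fixes A :: "'a::real_normed_vector \<Rightarrow> 'a"
  assumes lip: "lipschitz_op L A" and lmin: "0 < lmin" and lam: "\<And>n. n \<ge> 1 \<Longrightarrow> lmin \<le> lam n"
    and y: "\<And>n. n \<ge> 1 \<Longrightarrow> y n \<in> resolvent (lam n) B (w n - lam n *\<^sub>R A (w n))"
    and lim: "(\<lambda>n. norm (w n - y n)) \<longlonglongrightarrow> 0"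
  obtains c where "\<forall>\<^sub>F n in sequentially. c n - A (y n) \<in> B (y n)" and "c \<longlonglongrightarrow> 0"
proof
  define c where "c n = (1 / lam n) *\<^sub>R (w n - y n) - (A (w n) - A (y n))" for n
  have res: "c n - A (y n) \<in> B (y n)" and c_le: "norm (c n) \<le> (1 / lmin + L) * norm (w n - y n)"
    if "n \<ge> 1" for n
  proof -
    have "0 < lam n" using lam[OF that] lmin by linarith
    note residual = forward_backward_residual[OF lip this y[OF that]]
    show "c n - A (y n) \<in> B (y n)"
      using residual(1) unfolding c_def .
    have "1 / lam n \<le> 1 / lmin"
      using lam[OF that] lmin by (simp add: frac_le)
    then show "norm (c n) \<le> (1 / lmin + L) * norm (w n - y n)"
      using residual(2) unfolding c_def by (smt (verit) mult_right_mono norm_ge_zero)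
  qed
  show "\<forall>\<^sub>F n in sequentially. c n - A (y n) \<in> B (y n)"
    using res by (intro eventually_sequentiallyI[of 1])
  show "c \<longlonglongrightarrow> 0"
  proof (rule Lim_null_comparison)
    show "\<forall>\<^sub>F n in sequentially. norm (c n) \<le> (1 / lmin + L) * norm (w n - y n)"
      using c_le by (intro eventually_sequentiallyI[of 1])
    show "(\<lambda>n. (1 / lmin + L) * norm (w n - y n)) \<longlonglongrightarrow> 0"
      using tendsto_mult_right_zero[OF lim] .
  qed
qed

theorem lemma3p3:
  fixes A :: "'a::{real_inner, complete_space} \<Rightarrow> 'a"
    and B :: "'a \<Rightarrow> 'a set"
    and x w z y :: "nat \<Rightarrow> 'a"
    and lam alpha beta theta mu_seq p :: "nat \<Rightarrow> real"
    and mu L :: real and zz :: 'a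
  assumes C1: "zeros_sum A B \<noteq> {}"
    and C2_A: "lipschitz_op L A" "monotone_op A"
    and C2_B: "maximal_monotone B"
    and mu: "0 < mu" "mu < 1"
    and lam1: "lam 1 > 0"
    and p_nonneg: "\<And>n. p n \<ge> 0"
    and mu_nonneg: "\<And>n. mu_seq n \<ge> 0"
    and p_sum: "summable p"
    and w_def: "\<And>n. n \<ge> 1 \<Longrightarrow> w n = x n + alpha n *\<^sub>R (x n - x (n - 1))"
    and z_def: "\<And>n. n \<ge> 1 \<Longrightarrow> z n = x n + beta n *\<^sub>R (x n - x (n - 1))"
    and y_def: "\<And>n. n \<ge> 1 \<Longrightarrow> y n \<in> resolvent (lam n) B (w n - lam n *\<^sub>R A (w n))"
    and lam_def: "\<And>n. n \<ge> 1 \<Longrightarrow> lam (Suc n) =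
        (if A (w n) \<noteq> A (y n)
         then min ((mu_seq n + mu) * norm (w n - y n) / norm (A (w n) - A (y n))) (lam n + p n)
         else lam n + p n)"
    and no_stop: "\<And>n. n \<ge> 1 \<Longrightarrow> w n \<noteq> y n"
    and x_def: "\<And>n. n \<ge> 1 \<Longrightarrow> x (Suc n) =
        (1 - theta n) *\<^sub>R z n + theta n *\<^sub>R (y n - lam n *\<^sub>R (A (y n) - A (w n)))"
    and lim_wy: "(\<lambda>n. norm (w n - y n)) \<longlonglongrightarrow> 0"
    and weak: "weakly_converges w zz"
  shows "zz \<in> zeros_sum A B"
proof -
  \<comment> \<open>Only the resolvent step and the step-size rule matter.\<close>
  define lmin where "lmin = min (lam 1) (mu / max L 1)"
  have "0 < lmin"
    using lam1 mu(1) by (simp add: lmin_def)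
  moreover have "lmin \<le> lam n" if "n \<ge> 1" for n
    unfolding lmin_def
    using step_sizes_bounded_below[where p = p and mu_seq = mu_seq and lam = lam and w = w and y = y,
      OF C2_A(1) mu(1) p_nonneg mu_nonneg lam_def that] .
  ultimately obtain c where "\<forall>\<^sub>F n in sequentially. c n - A (y n) \<in> B (y n)" "c \<longlonglongrightarrow> 0"
    using forward_backward_residuals_vanish[OF C2_A(1) _ _ y_def lim_wy] by blast
  moreover have "weakly_converges y zz"
    using weak lim_wy by (rule weakly_converges_norm_diff)
  moreover have "monotone_setop B"
    using C2_B by (simp add: maximal_monotone_def)
  ultimately show ?thesis
    by (intro zeros_sum_if_monotonically_related[OF C2_B C2_A(1)]
        monotonically_related_weak_strong_limit[OF C2_A(2)])
qed

end
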